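(* Let $\mathcal X=\mathcal X_1\times\cdots\times\mathcal X_b$, $\mathcal X_i=\mathbb R^{m_i\times n_i}$ with trace inner product and norms $\|\cdot\|_{(i)}$ (dual $\|\cdot\|_{(i)\star}$), $f$ continuously differentiable, $\mathcal D$ a distribution on subsets of $[b]$, and assume constants $L^0_{i,S},L^1_{i,S}\ge0$ exist such that for all $S\in\operatorname{supp}(\mathcal D)$, $i\in S$, $X\in\mathcal X$ and $\Gamma$ with $\Gamma_j=0$ for $j\notin S$: $\|\nabla_if(X+\Gamma)-\nabla_if(X)\|_{(i)\star}\le(L^0_{i,S}+L^1_{i,S}\|\nabla_if(X)\|_{(i)\star})\|\Gamma_i\|_{(i)}$. Let $S\in\operatorname{supp}(\mathcal D)$. Then for all $X\in\mathcal X$ and $\Gamma$ with $\Gamma_i=0$ for $i\notin S$, $$\big|f(X+\Gamma)-f(X)-\langle\nabla f(X),\Gamma\rangle\big|\le\sum_{i\in S}\frac{L^0_{i,S}+L^1_{i,S}\|\nabla_if(X)\|_{(i)\star}}2\|\Gamma_i\|_{(i)}^2.$$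
   Context: $\operatorname{supp}(\mathcal D)$ is the set of subsets of $[b]$ with positive probability under $\mathcal D$. *)

theory Defs
  imports "HOL-Analysis.Analysis" "HOL-Probability.Probability_Mass_Function"
begin

text \<open>The product space X = X_0 x ... x X_(b-1), X_i = R^(m_i x n_i), is represented by
  real ^ 'k for a finite coordinate type 'k, together with labelling maps blk, rw, cl:
  coordinate k is the entry (rw k, cl k) of block blk k.\<close>

definition block_layout :: 
  "nat \<Rightarrow> (nat \<Rightarrow> nat) \<Rightarrow> (nat \<Rightarrow> nat) \<Rightarrow> ('k \<Rightarrow> nat) \<Rightarrow> ('k \<Rightarrow> nat) \<Rightarrow> ('k \<Rightarrow> nat) \<Rightarrow> bool" where
  "block_layout b m n blk rw cl \<longleftrightarrow>
     (\<forall>k. blk k < b) \<and>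
     (\<forall>i<b. bij_betw (\<lambda>k. (rw k, cl k)) {k. blk k = i} ({..<m i} \<times> {..<n i}))"

definition Mat :: "nat \<Rightarrow> nat \<Rightarrow> (nat \<Rightarrow> nat \<Rightarrow> real) set" where
  "Mat m n = {A. \<forall>r c. (m \<le> r \<or> n \<le> c) \<longrightarrow> A r c = 0}"

definition trace_inner :: "nat \<Rightarrow> nat \<Rightarrow> (nat \<Rightarrow> nat \<Rightarrow> real) \<Rightarrow> (nat \<Rightarrow> nat \<Rightarrow> real) \<Rightarrow> real" where
  "trace_inner m n A B = (\<Sum>r<m. \<Sum>c<n. A r c * B r c)"

definition is_mat_norm :: "nat \<Rightarrow> nat \<Rightarrow> ((nat \<Rightarrow> nat \<Rightarrow> real) \<Rightarrow> real) \<Rightarrow> bool" where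
  "is_mat_norm m n N \<longleftrightarrow>
     (\<forall>A\<in>Mat m n. \<forall>B\<in>Mat m n. N (\<lambda>r c. A r c + B r c) \<le> N A + N B) \<and>
     (\<forall>A\<in>Mat m n. \<forall>t. N (\<lambda>r c. t * A r c) = \<bar>t\<bar> * N A) \<and>
     (\<forall>A\<in>Mat m n. N A = 0 \<longleftrightarrow> A = (\<lambda>r c. 0))"

definition dual_norm :: "nat \<Rightarrow> nat \<Rightarrow> ((nat \<Rightarrow> nat \<Rightarrow> real) \<Rightarrow> real) \<Rightarrow> (nat \<Rightarrow> nat \<Rightarrow> real) \<Rightarrow> real" where
  "dual_norm m n N G = Sup {trace_inner m n G Y | Y. Y \<in> Mat m n \<and> N Y \<le> 1}"

definition block :: "('k::finite \<Rightarrow> nat) \<Rightarrow> ('k \<Rightarrow> nat) \<Rightarrow> ('k \<Rightarrow> nat) \<Rightarrow> real ^ 'k \<Rightarrow> nat \<Rightarrow> nat \<Rightarrow> nat \<Rightarrow> real" where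
  "block blk rw cl X i r c = (\<Sum>k | blk k = i \<and> rw k = r \<and> cl k = c. X $ k)"

text \<open>Gradient of f at x (w.r.t. the Euclidean = summed trace inner product).\<close>
definition grad :: "(real ^ 'k::finite \<Rightarrow> real) \<Rightarrow> real ^ 'k \<Rightarrow> real ^ 'k" where
  "grad f x = (\<chi> k. frechet_derivative f (at x) (axis k 1))"

end

theory Submission
  imports Defs
begin

text \<open>Along the segment t \<mapsto> X + t\<Gamma> the derivative of f is the inner product of
  grad f (X + t\<Gamma>) with \<Gamma>. Splitting it into the blocks i \<in> S and combining the Hoelder inequality
  for the dual norms with the smoothness hypothesis at the base point X, applied to the
  block-supported increment t\<Gamma>, bounds its change since t = 0 by t times the sum over i \<in> S of
  c i * N i (\<Gamma>_i)^2 with c i = L0 i S + L1 i S * (dual norm of the i-th block of grad f X);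
  integrating over [0, 1]
  produces the factor 1/2. Hoelder needs the supremum defining the dual norm to range over a
  bounded set: every norm on a finite-dimensional space dominates a multiple of the Euclidean
  norm, by compactness of the unit sphere.\<close>

lemma convex_on_subadditive_homogeneous:
  fixes p :: "'a::real_vector \<Rightarrow> real"
  assumes add: "\<And>x y. p (x + y) \<le> p x + p y"
    and scale: "\<And>a x. p (a *\<^sub>R x) = \<bar>a\<bar> * p x"
  shows "convex_on UNIV p"
proof (rule convex_onI)
  fix t :: real and x y assume "0 < t" "t < 1"
  then show "p ((1 - t) *\<^sub>R x + t *\<^sub>R y) \<le> (1 - t) * p x + t * p y"
    using add[of "(1 - t) *\<^sub>R x" "t *\<^sub>R y"] by (simp add: scale)
qed simp

lemma seminorm_ge_norm_on_cone:
  fixes p :: "'a::euclidean_space \<Rightarrow> real"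
  assumes add: "\<And>x y. p (x + y) \<le> p x + p y"
    and scale: "\<And>a x. p (a *\<^sub>R x) = \<bar>a\<bar> * p x"
    and "closed V" "cone V"
    and pos: "\<And>x. x \<in> V \<Longrightarrow> x \<noteq> 0 \<Longrightarrow> p x > 0"
  obtains c where "c > 0" "\<And>x. x \<in> V \<Longrightarrow> c * norm x \<le> p x"
proof -
  define K where "K = sphere 0 1 \<inter> V"
  have "compact K"
    unfolding K_def using \<open>closed V\<close> by (simp add: compact_Int_closed)
  have "continuous_on UNIV p"
    by (rule convex_on_continuous[OF open_UNIV convex_on_subadditive_homogeneous[OF add scale]])
  obtain c where "c > 0" and c_le: "\<And>x. x \<in> K \<Longrightarrow> c \<le> p x"
  proof (cases "K = {}")
    case False
    then obtain x where "x \<in> K" "\<forall>y\<in>K. p x \<le> p y"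
      using continuous_attains_inf[OF \<open>compact K\<close>] \<open>continuous_on UNIV p\<close>
      by (meson continuous_on_subset top_greatest)
    moreover have "p x > 0"
      using pos \<open>x \<in> K\<close> by (fastforce simp: K_def)
    ultimately show ?thesis
      using that[of "p x"] by blast
  qed (use that[of 1] in simp)
  have "c * norm x \<le> p x" if "x \<in> V" for x
  proof (cases "x = 0")
    case True
    then show ?thesis using scale[of 0 0] by simp
  next
    case False
    have "(1 / norm x) *\<^sub>R x \<in> K"
      using \<open>cone V\<close> \<open>x \<in> V\<close> False by (simp add: K_def cone_def)
    then have "c \<le> p x / norm x"
      using c_le[of "(1 / norm x) *\<^sub>R x"] scale[of "1 / norm x" x] by simp
    then show ?thesis using False by (simp add: field_simps)
  qed
  then show thesis using that \<open>c > 0\<close> by blast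
qed

lemma first_order_remainder_le:
  fixes g g' :: "real \<Rightarrow> real"
  assumes deriv: "\<And>t. 0 \<le> t \<Longrightarrow> t \<le> 1 \<Longrightarrow> (g has_real_derivative g' t) (at t)"
    and increment: "\<And>t. 0 \<le> t \<Longrightarrow> t \<le> 1 \<Longrightarrow> g' t - g' 0 \<le> C * t"
  shows "g 1 - g 0 - g' 0 \<le> C / 2"
proof -
  let ?h = "\<lambda>t. g t - t * g' 0 - C / 2 * t\<^sup>2"
  have "?h 1 \<le> ?h 0"
  proof (rule DERIV_nonpos_imp_nonincreasing[of 0 1 ?h])
    fix t :: real assume "0 \<le> t" "t \<le> 1"
    have "(?h has_real_derivative g' t - g' 0 - C * t) (at t)"
      using deriv[OF \<open>0 \<le> t\<close> \<open>t \<le> 1\<close>]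
      by (auto intro!: derivative_eq_intros simp: power2_eq_square)
    moreover have "g' t - g' 0 - C * t \<le> 0"
      using increment[OF \<open>0 \<le> t\<close> \<open>t \<le> 1\<close>] by simp
    ultimately show "\<exists>y. (?h has_real_derivative y) (at t) \<and> y \<le> 0"
      by blast
  qed simp
  then show ?thesis by simp
qed

lemma abs_first_order_remainder_le:
  fixes g g' :: "real \<Rightarrow> real"
  assumes deriv: "\<And>t. 0 \<le> t \<Longrightarrow> t \<le> 1 \<Longrightarrow> (g has_real_derivative g' t) (at t)"
    and increment: "\<And>t. 0 \<le> t \<Longrightarrow> t \<le> 1 \<Longrightarrow> \<bar>g' t - g' 0\<bar> \<le> C * t"
  shows "\<bar>g 1 - g 0 - g' 0\<bar> \<le> C / 2"
proof -
  have "g 1 - g 0 - g' 0 \<le> C / 2"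
    using increment by (intro first_order_remainder_le[OF deriv]) (simp_all add: abs_le_iff)
  moreover have "- g 1 - - g 0 - - g' 0 \<le> C / 2"
  proof (rule first_order_remainder_le[of "\<lambda>t. - g t"])
    fix t :: real assume "0 \<le> t" "t \<le> 1"
    show "((\<lambda>t. - g t) has_real_derivative - g' t) (at t)"
      using deriv[OF \<open>0 \<le> t\<close> \<open>t \<le> 1\<close>] by (rule DERIV_minus)
    show "- g' t - - g' 0 \<le> C * t"
      using increment[OF \<open>0 \<le> t\<close> \<open>t \<le> 1\<close>] by (simp add: abs_le_iff)
  qed
  ultimately show ?thesis
    by linarith
qed

lemma mat_norm_triangle:
  "is_mat_norm m n N \<Longrightarrow> A \<in> Mat m n \<Longrightarrow> B \<in> Mat m n \<Longrightarrow> N (\<lambda>r c. A r c + B r c) \<le> N A + N B"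
  unfolding is_mat_norm_def by blast

lemma mat_norm_scale:
  "is_mat_norm m n N \<Longrightarrow> A \<in> Mat m n \<Longrightarrow> N (\<lambda>r c. t * A r c) = \<bar>t\<bar> * N A"
  unfolding is_mat_norm_def by blast

lemma mat_norm_eq_0_iff:
  "is_mat_norm m n N \<Longrightarrow> A \<in> Mat m n \<Longrightarrow> N A = 0 \<longleftrightarrow> A = (\<lambda>r c. 0)"
  unfolding is_mat_norm_def by blast

lemma mat_norm_nonneg:
  assumes "is_mat_norm m n N" "A \<in> Mat m n"
  shows "N A \<ge> 0"
proof -
  let ?negA = "\<lambda>r c. (-1) * A r c"
  have "?negA \<in> Mat m n" "(\<lambda>r c. 0::real) \<in> Mat m n"
    using assms(2) by (simp_all add: Mat_def)
  have "0 = N (\<lambda>r c. A r c + ?negA r c)"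
    using mat_norm_eq_0_iff[OF assms(1) \<open>(\<lambda>r c. 0) \<in> Mat m n\<close>] by simp
  also have "\<dots> \<le> N A + N ?negA"
    by (rule mat_norm_triangle[OF assms \<open>?negA \<in> Mat m n\<close>])
  also have "N ?negA = N A"
    using mat_norm_scale[OF assms, of "-1"] by simp
  finally show ?thesis by simp
qed

lemma block_layout_bij:
  assumes "block_layout b m n blk rw cl" "i < b"
  shows "bij_betw (\<lambda>k. (rw k, cl k)) {k. blk k = i} ({..<m i} \<times> {..<n i})"
  using assms unfolding block_layout_def by blast

lemma block_in_Mat:
  assumes "block_layout b m n blk rw cl" "i < b"
  shows "block blk rw cl v i \<in> Mat (m i) (n i)"
proof -
  have range: "rw k < m i \<and> cl k < n i" if "blk k = i" for k
    using bij_betwE[OF block_layout_bij[OF assms]] that by auto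
  have "block blk rw cl v i r c = 0" if "m i \<le> r \<or> n i \<le> c" for r c
  proof -
    have "{k. blk k = i \<and> rw k = r \<and> cl k = c} = {}"
      using range that by fastforce
    then show ?thesis
      unfolding block_def by (simp only: sum.empty)
  qed
  then show ?thesis
    unfolding Mat_def by blast
qed

lemma block_nth:
  assumes "block_layout b m n blk rw cl"
  shows "block blk rw cl v (blk k) (rw k) (cl k) = v $ k"
proof -
  have "blk k < b"
    using assms by (simp add: block_layout_def)
  then have "inj_on (\<lambda>k. (rw k, cl k)) {k'. blk k' = blk k}"
    using block_layout_bij[OF assms] bij_betw_def by blast
  then have "{k'. blk k' = blk k \<and> rw k' = rw k \<and> cl k' = cl k} = {k}"
    by (auto simp: inj_on_def)
  then show ?thesis
    by (simp add: block_def)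
qed

lemma block_add:
  "block blk rw cl (u + v) i = (\<lambda>r c. block blk rw cl u i r c + block blk rw cl v i r c)"
  unfolding block_def by (simp add: sum.distrib)

lemma block_diff:
  "block blk rw cl (u - v) i = (\<lambda>r c. block blk rw cl u i r c - block blk rw cl v i r c)"
  unfolding block_def by (simp add: sum_subtractf)

lemma block_scaleR:
  "block blk rw cl (a *\<^sub>R v) i = (\<lambda>r c. a * block blk rw cl v i r c)"
  unfolding block_def by (simp add: sum_distrib_left)

lemma mat_norm_block_scaleR:
  assumes "block_layout b m n blk rw cl" "i < b" "is_mat_norm (m i) (n i) N"
  shows "N (block blk rw cl (a *\<^sub>R v) i) = \<bar>a\<bar> * N (block blk rw cl v i)"
  unfolding block_scaleR using mat_norm_scale[OF assms(3) block_in_Mat[OF assms(1,2)]] .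

lemma sum_block_eq_trace_inner:
  assumes "block_layout b m n blk rw cl" "i < b"
  shows "(\<Sum>k | blk k = i. u $ k * v $ k)
    = trace_inner (m i) (n i) (block blk rw cl u i) (block blk rw cl v i)"
proof -
  let ?B = "\<lambda>v. block blk rw cl v i"
  have "trace_inner (m i) (n i) (?B u) (?B v) = (\<Sum>(r, c)\<in>{..<m i} \<times> {..<n i}. ?B u r c * ?B v r c)"
    unfolding trace_inner_def by (simp add: sum.cartesian_product)
  also have "\<dots> = (\<Sum>k | blk k = i. ?B u (rw k) (cl k) * ?B v (rw k) (cl k))"
    using sum.reindex_bij_betw[OF block_layout_bij[OF assms], of "\<lambda>(r, c). ?B u r c * ?B v r c"]
    by simp
  also have "\<dots> = (\<Sum>k | blk k = i. u $ k * v $ k)"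
    using block_nth[OF assms(1)] by (intro sum.cong) auto
  finally show ?thesis ..
qed

lemma block_layout_surj:
  assumes "block_layout b m n blk rw cl" "i < b" "r < m i" "s < n i"
  obtains k where "blk k = i" "rw k = r" "cl k = s"
proof -
  have "(r, s) \<in> (\<lambda>k. (rw k, cl k)) ` {k. blk k = i}"
    using bij_betw_imp_surj_on[OF block_layout_bij[OF assms(1,2)]] assms(3,4) by auto
  then show ?thesis
    using that by blast
qed

lemma exists_block_eq:
  fixes blk rw cl :: "'k::finite \<Rightarrow> nat"
  assumes "block_layout b m n blk rw cl" "i < b" "A \<in> Mat (m i) (n i)"
  obtains v :: "real ^ 'k" where "block blk rw cl v i = A" "\<forall>k. blk k \<noteq> i \<longrightarrow> v $ k = 0"
proof -
  define v :: "real ^ 'k" where "v = (\<chi> k. if blk k = i then A (rw k) (cl k) else 0)"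
  have "block blk rw cl v i r s = A r s" for r s
  proof (cases "r < m i \<and> s < n i")
    case True
    then obtain k where "blk k = i" "rw k = r" "cl k = s"
      using block_layout_surj[OF assms(1,2)] by blast
    then show ?thesis
      using block_nth[OF assms(1), of v k] by (simp add: v_def)
  next
    case False
    then show ?thesis
      using block_in_Mat[OF assms(1,2), of v] assms(3) by (auto simp: Mat_def not_less)
  qed
  then show ?thesis
    using that[of v] by (auto simp: v_def)
qed

lemma mat_norm_block_pos:
  assumes layout: "block_layout b m n blk rw cl" and "i < b" and norm: "is_mat_norm (m i) (n i) N"
    and "\<forall>k. blk k \<noteq> i \<longrightarrow> v $ k = 0" "v \<noteq> 0"
  shows "N (block blk rw cl v i) > 0"
proof -
  obtain k where "v $ k \<noteq> 0"
    using \<open>v \<noteq> 0\<close> by (auto simp: vec_eq_iff)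
  with assms(4) have "blk k = i"
    by auto
  then have "block blk rw cl v i \<noteq> (\<lambda>r c. 0)"
    using block_nth[OF layout, of v k] \<open>v $ k \<noteq> 0\<close> by (metis (mono_tags))
  then show ?thesis
    using mat_norm_eq_0_iff[OF norm block_in_Mat[OF layout \<open>i < b\<close>]]
      mat_norm_nonneg[OF norm block_in_Mat[OF layout \<open>i < b\<close>]]
    by (metis order_le_less)
qed

lemma mat_norm_ge_entry:
  fixes blk rw cl :: "'k::finite \<Rightarrow> nat"
  assumes layout: "block_layout b m n blk rw cl" and "i < b" and norm: "is_mat_norm (m i) (n i) N"
  obtains c where "c > 0" "\<And>A r s. A \<in> Mat (m i) (n i) \<Longrightarrow> c * \<bar>A r s\<bar> \<le> N A"
proof -
  let ?p = "\<lambda>v :: real ^ 'k. N (block blk rw cl v i)"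
  define V :: "(real ^ 'k) set" where "V = {v. \<forall>k. blk k \<noteq> i \<longrightarrow> v $ k = 0}"
  note block_Mat = block_in_Mat[OF layout \<open>i < b\<close>]
  have add: "?p (u + v) \<le> ?p u + ?p v" for u v
    unfolding block_add by (rule mat_norm_triangle[OF norm block_Mat block_Mat])
  have "closed V"
    unfolding V_def by (rule closed_substandard_cart)
  moreover have "cone V"
    by (simp add: V_def cone_def)
  ultimately obtain c where "c > 0" and c: "\<And>v. v \<in> V \<Longrightarrow> c * norm v \<le> ?p v"
    using seminorm_ge_norm_on_cone[of ?p V] add mat_norm_block_scaleR[OF layout \<open>i < b\<close> norm]
      mat_norm_block_pos[OF layout \<open>i < b\<close> norm]
    unfolding V_def by blast
  have "c * \<bar>A r s\<bar> \<le> N A" if A: "A \<in> Mat (m i) (n i)" for A r s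
  proof (cases "r < m i \<and> s < n i")
    case True
    obtain v where v: "block blk rw cl v i = A" "v \<in> V"
      using exists_block_eq[OF layout \<open>i < b\<close> A] unfolding V_def by blast
    obtain k where "blk k = i" "rw k = r" "cl k = s"
      using True block_layout_surj[OF layout \<open>i < b\<close>] by blast
    then have "\<bar>A r s\<bar> \<le> norm v"
      using block_nth[OF layout, of v k] v(1) component_le_norm_cart[of v k] by simp
    then have "c * \<bar>A r s\<bar> \<le> c * norm v"
      using \<open>c > 0\<close> by simp
    also have "\<dots> \<le> N A"
      using c[OF v(2)] v(1) by simp
    finally show ?thesis .
  next
    case False
    then show ?thesis
      using A mat_norm_nonneg[OF norm A] by (auto simp: Mat_def not_less)
  qed
  then show thesis
    using that \<open>c > 0\<close> by blast
qed

lemma dual_norm_bdd_above: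
  fixes blk rw cl :: "'k::finite \<Rightarrow> nat"
  assumes layout: "block_layout b m n blk rw cl" and "i < b" and norm: "is_mat_norm (m i) (n i) N"
  shows "bdd_above {trace_inner (m i) (n i) G Y | Y. Y \<in> Mat (m i) (n i) \<and> N Y \<le> 1}"
proof -
  obtain c where "c > 0" and c: "\<And>A r s. A \<in> Mat (m i) (n i) \<Longrightarrow> c * \<bar>A r s\<bar> \<le> N A"
    using mat_norm_ge_entry[OF layout \<open>i < b\<close> norm] by blast
  have "trace_inner (m i) (n i) G Y \<le> (\<Sum>r<m i. \<Sum>s<n i. \<bar>G r s\<bar> / c)"
    if "Y \<in> Mat (m i) (n i)" "N Y \<le> 1" for Y
    unfolding trace_inner_def
  proof (intro sum_mono)
    fix r s
    have "\<bar>Y r s\<bar> \<le> 1 / c"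
      using c[OF \<open>Y \<in> Mat (m i) (n i)\<close>, of r s] \<open>N Y \<le> 1\<close> \<open>c > 0\<close> by (simp add: field_simps)
    then have "G r s * Y r s \<le> \<bar>G r s\<bar> * (1 / c)"
      by (metis abs_ge_self abs_mult abs_ge_zero mult_left_mono order_trans)
    then show "G r s * Y r s \<le> \<bar>G r s\<bar> / c"
      by simp
  qed
  then show ?thesis
    by (intro bdd_aboveI) blast
qed

lemma trace_inner_le_dual_norm:
  fixes blk rw cl :: "'k::finite \<Rightarrow> nat"
  assumes layout: "block_layout b m n blk rw cl" and "i < b" and norm: "is_mat_norm (m i) (n i) N"
    and Z: "Z \<in> Mat (m i) (n i)"
  shows "trace_inner (m i) (n i) G Z \<le> dual_norm (m i) (n i) N G * N Z"
proof (cases "N Z = 0")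
  case True
  then show ?thesis
    using mat_norm_eq_0_iff[OF norm Z] by (simp add: trace_inner_def)
next
  case False
  then have "N Z > 0"
    using mat_norm_nonneg[OF norm Z] by simp
  define Y where "Y = (\<lambda>r c. (1 / N Z) * Z r c)"
  have "Y \<in> Mat (m i) (n i)"
    using Z by (simp add: Mat_def Y_def)
  moreover have "N Y \<le> 1"
    using mat_norm_scale[OF norm Z, of "1 / N Z"] \<open>N Z > 0\<close> by (simp add: Y_def)
  ultimately have "trace_inner (m i) (n i) G Y \<le> dual_norm (m i) (n i) N G"
    unfolding dual_norm_def using dual_norm_bdd_above[OF layout \<open>i < b\<close> norm]
    by (intro cSup_upper) auto
  moreover have "trace_inner (m i) (n i) G Y = trace_inner (m i) (n i) G Z / N Z"
    by (simp add: trace_inner_def Y_def sum_divide_distrib)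
  ultimately show ?thesis
    using \<open>N Z > 0\<close> by (simp add: field_simps)
qed

lemma abs_trace_inner_le_dual_norm:
  fixes blk rw cl :: "'k::finite \<Rightarrow> nat"
  assumes layout: "block_layout b m n blk rw cl" and "i < b" and norm: "is_mat_norm (m i) (n i) N"
    and Z: "Z \<in> Mat (m i) (n i)"
  shows "\<bar>trace_inner (m i) (n i) G Z\<bar> \<le> dual_norm (m i) (n i) N G * N Z"
proof -
  let ?negZ = "\<lambda>r c. (-1) * Z r c"
  have "?negZ \<in> Mat (m i) (n i)"
    using Z by (simp add: Mat_def)
  then have "- trace_inner (m i) (n i) G Z \<le> dual_norm (m i) (n i) N G * N Z"
    using trace_inner_le_dual_norm[OF layout \<open>i < b\<close> norm, of ?negZ G]
      mat_norm_scale[OF norm Z, of "-1"]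
    by (simp add: trace_inner_def sum_negf)
  then show ?thesis
    using trace_inner_le_dual_norm[OF layout \<open>i < b\<close> norm Z, of G] by linarith
qed

lemma inner_eq_sum_trace_inner_blocks:
  fixes u \<Gamma> :: "real ^ 'k::finite"
  assumes layout: "block_layout b m n blk rw cl" and S: "S \<subseteq> {..<b}"
    and \<Gamma>: "\<forall>k. blk k \<notin> S \<longrightarrow> \<Gamma> $ k = 0"
  shows "u \<bullet> \<Gamma> = (\<Sum>i\<in>S. trace_inner (m i) (n i) (block blk rw cl u i) (block blk rw cl \<Gamma> i))"
proof -
  have "finite S"
    using S finite_subset by blast
  have "u \<bullet> \<Gamma> = (\<Sum>k | blk k \<in> S. u $ k * \<Gamma> $ k)"
    unfolding inner_vec_def inner_real_def using \<Gamma> by (intro sum.mono_neutral_right) auto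
  also have "\<dots> = (\<Sum>i\<in>S. \<Sum>k \<in> {k \<in> {k. blk k \<in> S}. blk k = i}. u $ k * \<Gamma> $ k)"
    by (rule sum.group[symmetric]) (use \<open>finite S\<close> in auto)
  also have "\<dots> = (\<Sum>i\<in>S. \<Sum>k | blk k = i. u $ k * \<Gamma> $ k)"
    by (intro sum.cong) auto
  also have "\<dots> = (\<Sum>i\<in>S. trace_inner (m i) (n i) (block blk rw cl u i) (block blk rw cl \<Gamma> i))"
    using sum_block_eq_trace_inner[OF layout] S by (intro sum.cong) auto
  finally show ?thesis .
qed

lemma abs_inner_le_sum_dual_norm_blocks:
  fixes u \<Gamma> :: "real ^ 'k::finite"
  assumes layout: "block_layout b m n blk rw cl" and norms: "\<forall>i<b. is_mat_norm (m i) (n i) (N i)"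
    and S: "S \<subseteq> {..<b}" and \<Gamma>: "\<forall>k. blk k \<notin> S \<longrightarrow> \<Gamma> $ k = 0"
  shows "\<bar>u \<bullet> \<Gamma>\<bar>
    \<le> (\<Sum>i\<in>S. dual_norm (m i) (n i) (N i) (block blk rw cl u i) * N i (block blk rw cl \<Gamma> i))"
  unfolding inner_eq_sum_trace_inner_blocks[OF layout S \<Gamma>]
proof (rule order_trans[OF sum_abs sum_mono])
  fix i assume "i \<in> S"
  then have "i < b"
    using S by auto
  then show "\<bar>trace_inner (m i) (n i) (block blk rw cl u i) (block blk rw cl \<Gamma> i)\<bar>
      \<le> dual_norm (m i) (n i) (N i) (block blk rw cl u i) * N i (block blk rw cl \<Gamma> i)"
    using norms by (intro abs_trace_inner_le_dual_norm[OF layout] block_in_Mat[OF layout]) auto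
qed

lemma grad_inner_eq_derivative:
  assumes "(f has_derivative f') (at x)"
  shows "grad f x \<bullet> v = f' v"
proof -
  have "linear f'"
    using assms by (rule has_derivative_linear)
  have "grad f x = (\<chi> k. f' (axis k 1))"
    unfolding grad_def frechet_derivative_at[OF assms, symmetric] ..
  have "f' v = f' (\<Sum>k\<in>UNIV. v $ k *\<^sub>R axis k 1)"
    using basis_expansion[of v] by (simp add: scalar_mult_eq_scaleR)
  also have "\<dots> = (\<Sum>k\<in>UNIV. v $ k * f' (axis k 1))"
    by (simp add: linear_sum[OF \<open>linear f'\<close>] linear_cmul[OF \<open>linear f'\<close>] o_def)
  also have "\<dots> = grad f x \<bullet> v"
    unfolding \<open>grad f x = _\<close> by (simp add: inner_vec_def mult.commute)
  finally show ?thesis ..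
qed

lemma has_real_derivative_along_line:
  fixes f :: "real ^ 'k::finite \<Rightarrow> real"
  assumes "\<forall>x. f differentiable (at x)"
  shows "((\<lambda>t. f (x + t *\<^sub>R v)) has_real_derivative grad f (x + t *\<^sub>R v) \<bullet> v) (at t)"
proof -
  define f' where "f' = frechet_derivative f (at (x + t *\<^sub>R v))"
  have f': "(f has_derivative f') (at (x + t *\<^sub>R v))"
    using assms frechet_derivative_works unfolding f'_def by blast
  have "((\<lambda>t. x + t *\<^sub>R v) has_derivative (\<lambda>h. h *\<^sub>R v)) (at t)"
    by (auto intro!: derivative_eq_intros)
  from has_derivative_compose[OF this f']
  have "((\<lambda>t. f (x + t *\<^sub>R v)) has_derivative (\<lambda>h. f' (h *\<^sub>R v))) (at t)" .
  moreover have "(\<lambda>h. f' (h *\<^sub>R v)) = (*) (grad f (x + t *\<^sub>R v) \<bullet> v)"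
    using linear_cmul[OF has_derivative_linear[OF f']] grad_inner_eq_derivative[OF f'] by auto
  ultimately show ?thesis
    unfolding has_field_derivative_def by simp
qed

theorem lemma10:
  fixes f :: "real ^ 'k::finite \<Rightarrow> real"
    and b :: nat and m n :: "nat \<Rightarrow> nat"
    and blk rw cl :: "'k \<Rightarrow> nat"
    and N :: "nat \<Rightarrow> (nat \<Rightarrow> nat \<Rightarrow> real) \<Rightarrow> real"
    and D :: "nat set pmf"
    and L0 L1 :: "nat \<Rightarrow> nat set \<Rightarrow> real"
    and S :: "nat set" and X \<Gamma> :: "real ^ 'k"
  assumes layout: "block_layout b m n blk rw cl"
    and norms: "\<forall>i<b. is_mat_norm (m i) (n i) (N i)"
    and diff: "\<forall>x. f differentiable (at x)"
    and C1: "continuous_on UNIV (grad f)"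
    and D_supp: "set_pmf D \<subseteq> Pow {..<b}"
    and L_nonneg: "\<forall>S'\<in>set_pmf D. \<forall>i\<in>S'. L0 i S' \<ge> 0 \<and> L1 i S' \<ge> 0"
    and smooth: "\<forall>S'\<in>set_pmf D. \<forall>i\<in>S'. \<forall>Y G. (\<forall>k. blk k \<notin> S' \<longrightarrow> G $ k = 0) \<longrightarrow>
        dual_norm (m i) (n i) (N i)
          (\<lambda>r c. block blk rw cl (grad f (Y + G)) i r c - block blk rw cl (grad f Y) i r c)
        \<le> (L0 i S' + L1 i S' * dual_norm (m i) (n i) (N i) (block blk rw cl (grad f Y) i))
           * N i (block blk rw cl G i)"
    and S_in: "S \<in> set_pmf D"
    and Gamma_supp: "\<forall>k. blk k \<notin> S \<longrightarrow> \<Gamma> $ k = 0"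
  shows "\<bar>f (X + \<Gamma>) - f X - grad f X \<bullet> \<Gamma>\<bar>
    \<le> (\<Sum>i\<in>S. (L0 i S + L1 i S * dual_norm (m i) (n i) (N i) (block blk rw cl (grad f X) i)) / 2
                 * (N i (block blk rw cl \<Gamma> i))\<^sup>2)"
proof -
  let ?B = "block blk rw cl"
  have S: "S \<subseteq> {..<b}"
    using D_supp S_in by blast
  define c where "c i = L0 i S + L1 i S * dual_norm (m i) (n i) (N i) (?B (grad f X) i)" for i
  define C where "C = (\<Sum>i\<in>S. c i * (N i (?B \<Gamma> i))\<^sup>2)"
  have "\<bar>grad f (X + t *\<^sub>R \<Gamma>) \<bullet> \<Gamma> - grad f X \<bullet> \<Gamma>\<bar> \<le> C * t" if "0 \<le> t" for t
  proof -
    have "\<bar>grad f (X + t *\<^sub>R \<Gamma>) \<bullet> \<Gamma> - grad f X \<bullet> \<Gamma>\<bar>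
        \<le> (\<Sum>i\<in>S. dual_norm (m i) (n i) (N i) (?B (grad f (X + t *\<^sub>R \<Gamma>) - grad f X) i) * N i (?B \<Gamma> i))"
      unfolding inner_diff_left[symmetric]
      by (rule abs_inner_le_sum_dual_norm_blocks[OF layout norms S Gamma_supp])
    also have "\<dots> \<le> (\<Sum>i\<in>S. c i * (t * N i (?B \<Gamma> i)) * N i (?B \<Gamma> i))"
    proof (rule sum_mono)
      fix i assume "i \<in> S"
      then have "i < b"
        using S by auto
      with norms have norm: "is_mat_norm (m i) (n i) (N i)"
        by blast
      have "dual_norm (m i) (n i) (N i) (?B (grad f (X + t *\<^sub>R \<Gamma>) - grad f X) i)
          \<le> c i * N i (?B (t *\<^sub>R \<Gamma>) i)"
        unfolding block_diff c_def
        using smooth[rule_format, OF S_in \<open>i \<in> S\<close>, of "t *\<^sub>R \<Gamma>" X] Gamma_supp by simp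
      also have "N i (?B (t *\<^sub>R \<Gamma>) i) = t * N i (?B \<Gamma> i)"
        using mat_norm_block_scaleR[OF layout \<open>i < b\<close> norm] \<open>0 \<le> t\<close> by simp
      finally show "dual_norm (m i) (n i) (N i) (?B (grad f (X + t *\<^sub>R \<Gamma>) - grad f X) i) * N i (?B \<Gamma> i)
          \<le> c i * (t * N i (?B \<Gamma> i)) * N i (?B \<Gamma> i)"
        using mat_norm_nonneg[OF norm block_in_Mat[OF layout \<open>i < b\<close>]] by (simp add: mult_right_mono)
    qed
    also have "\<dots> = C * t"
      by (simp add: C_def sum_distrib_left power2_eq_square mult_ac)
    finally show ?thesis .
  qed
  then have "\<bar>f (X + \<Gamma>) - f X - grad f X \<bullet> \<Gamma>\<bar> \<le> C / 2"
    using abs_first_order_remainder_le[of "\<lambda>t. f (X + t *\<^sub>R \<Gamma>)" "\<lambda>t. grad f (X + t *\<^sub>R \<Gamma>) \<bullet> \<Gamma>" C]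
      has_real_derivative_along_line[OF diff]
    by simp
  also have "C / 2 = (\<Sum>i\<in>S. c i / 2 * (N i (?B \<Gamma> i))\<^sup>2)"
    by (simp add: C_def sum_divide_distrib)
  finally show ?thesis
    unfolding c_def .
qed

end
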